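(* The real form $$O_{(4,1)}(x,y,z,w)=x^4z^2w^2+y^4x^2w^2+z^4x^2y^2+w^4y^2z^2-4x^2y^2z^2w^2$$ is an extremal element of $\mathcal P_{4,8}$.
   Context: $\mathcal P_{n,m}$ denotes the convex cone of all positive semidefinite real forms (homogeneous polynomials nonnegative on $\mathbb R^n$) in $n$ variables of degree $m$. A form $F\in\mathcal P_{n,m}$ is extremal if $F=F_1+F_2$ with $F_1,F_2\in\mathcal P_{n,m}$ implies $F_i=\lambda_iF$ for some nonnegative reals $\lambda_i$. *)

theory Defs
  imports Main Complex_Main
begin

text \<open>Real forms in n variables of degree m, viewed as functions on points
  x :: nat \<Rightarrow> real, of which only the coordinates x 0, ..., x (n-1) are used.\<close>

definition is_form :: "nat \<Rightarrow> nat \<Rightarrow> ((nat \<Rightarrow> real) \<Rightarrow> real) \<Rightarrow> bool" where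
  "is_form n m F \<longleftrightarrow>
     (\<exists>S :: (nat \<Rightarrow> nat) set. \<exists>c :: (nat \<Rightarrow> nat) \<Rightarrow> real.
        finite S \<and>
        (\<forall>a\<in>S. (\<forall>i\<ge>n. a i = 0) \<and> (\<Sum>i<n. a i) = m) \<and>
        (\<forall>x. F x = (\<Sum>a\<in>S. c a * (\<Prod>i<n. x i ^ a i))))"

definition psd_forms :: "nat \<Rightarrow> nat \<Rightarrow> ((nat \<Rightarrow> real) \<Rightarrow> real) set" where
  "psd_forms n m = {F. is_form n m F \<and> (\<forall>x. F x \<ge> 0)}"

definition extremal :: "nat \<Rightarrow> nat \<Rightarrow> ((nat \<Rightarrow> real) \<Rightarrow> real) \<Rightarrow> bool" where
  "extremal n m F \<longleftrightarrow> F \<in> psd_forms n m \<and>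
     (\<forall>F1 F2. F1 \<in> psd_forms n m \<longrightarrow> F2 \<in> psd_forms n m \<longrightarrow>
        (\<forall>x. F x = F1 x + F2 x) \<longrightarrow>
        (\<exists>l1 l2 :: real. l1 \<ge> 0 \<and> l2 \<ge> 0 \<and>
           (\<forall>x. F1 x = l1 * F x) \<and> (\<forall>x. F2 x = l2 * F x)))"

definition O41 :: "(nat \<Rightarrow> real) \<Rightarrow> real" where
  "O41 v = (let x = v 0; y = v 1; z = v 2; w = v 3 in
     x^4*z^2*w^2 + y^4*x^2*w^2 + z^4*x^2*y^2 + w^4*y^2*z^2 - 4*x^2*y^2*z^2*w^2)"

end

theory Submission
  imports Defs
begin

text \<open>Let F be a positive semidefinite octic with F \<le> O41, e.g. a summand of a decomposition
  of O41. Along the curves v r = L r * t ^ p r, where p is one of the cyclic shifts of (0,1,2,3),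
  O41 is O(t^10) as t \<rightarrow> 0, hence so is F; this confines the monomials of F to the
  15 lattice points of the Newton polytope of O41. Moreover O41 vanishes at every sign vector
  (1, \<plusminus>1, \<plusminus>1, \<plusminus>1), so F vanishes there together with its gradient. Averaging these
  conditions against the characters of {\<plusminus>1}^3 separates the monomials by parity, and the
  resulting linear system forces F to be a multiple of O41.\<close>

type_synonym exp4 = "nat \<times> nat \<times> nat \<times> nat"

fun exponent4 :: "exp4 \<Rightarrow> nat \<Rightarrow> nat" where
  "exponent4 (i, j, k, l) r = (if r = 0 then i else if r = 1 then j else if r = 2 then k else l)"

definition mono4 :: "exp4 \<Rightarrow> (nat \<Rightarrow> real) \<Rightarrow> real" where
  "mono4 b v = (\<Prod>r<4. v r ^ exponent4 b r)"

definition deg4 :: "exp4 \<Rightarrow> nat" where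
  "deg4 b = (\<Sum>r<4. exponent4 b r)"

definition wdeg4 :: "exp4 \<Rightarrow> (nat \<Rightarrow> nat) \<Rightarrow> nat" where
  "wdeg4 b p = (\<Sum>r<4. exponent4 b r * p r)"

definition exp_box :: "nat \<Rightarrow> exp4 set" where
  "exp_box d = {..d} \<times> {..d} \<times> {..d} \<times> {..d}"

lemma mono4_simps [simp]: "mono4 (i, j, k, l) v = v 0 ^ i * v 1 ^ j * v 2 ^ k * v 3 ^ l"
  by (simp add: mono4_def eval_nat_numeral mult_ac)

lemma deg4_simps: "deg4 (i, j, k, l) = i + j + k + l"
  by (simp add: deg4_def eval_nat_numeral)

lemma wdeg4_simps: "wdeg4 (i, j, k, l) p = i * p 0 + j * p 1 + k * p 2 + l * p 3"
  by (simp add: wdeg4_def eval_nat_numeral)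

lemma finite_exp_box [simp]: "finite (exp_box d)"
  by (simp add: exp_box_def)

lemma is_form_4_imp_mono4_sum:
  assumes "is_form 4 d G"
  obtains C where "\<And>v. G v = (\<Sum>b\<in>exp_box d. C b * mono4 b v)"
    and "\<And>b. C b \<noteq> 0 \<Longrightarrow> b \<in> exp_box d \<and> deg4 b = d"
proof -
  obtain S c where "finite S" and S: "\<forall>a\<in>S. (\<forall>i\<ge>4. a i = 0) \<and> (\<Sum>i<4. a i) = d"
    and G: "\<forall>x. G x = (\<Sum>a\<in>S. c a * (\<Prod>i<4. x i ^ a i))"
    using assms unfolding is_form_def by blast
  define tup where "tup a = (a 0, a 1, a 2, a 3)" for a :: "nat \<Rightarrow> nat"
  define C where "C b = (\<Sum>a\<in>{a\<in>S. tup a = b}. c a)" for b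
  have prod_tup: "(\<Prod>i<4. x i ^ a i) = mono4 (tup a) x" for a x
    by (simp add: tup_def eval_nat_numeral mult_ac)
  have deg_tup: "deg4 (tup a) = d" if "a \<in> S" for a
    using S that by (simp add: tup_def deg4_simps eval_nat_numeral)
  have tup_S: "tup ` S \<subseteq> exp_box d"
    using deg_tup by (fastforce simp: exp_box_def tup_def deg4_simps)
  have "G v = (\<Sum>b\<in>exp_box d. C b * mono4 b v)" for v
  proof -
    have "G v = (\<Sum>a\<in>S. c a * mono4 (tup a) v)"
      using G prod_tup by simp
    also have "\<dots> = (\<Sum>b\<in>exp_box d. \<Sum>a\<in>{a\<in>S. tup a = b}. c a * mono4 (tup a) v)"
      by (rule sum.group[OF \<open>finite S\<close> finite_exp_box tup_S, symmetric])
    also have "\<dots> = (\<Sum>b\<in>exp_box d. C b * mono4 b v)"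
      by (simp add: C_def sum_distrib_right)
    finally show ?thesis .
  qed
  moreover have "b \<in> exp_box d \<and> deg4 b = d" if "C b \<noteq> 0" for b
  proof -
    from that obtain a where "a \<in> S" "tup a = b"
      unfolding C_def by (metis (mono_tags, lifting) mem_Collect_eq sum.neutral)
    with deg_tup tup_S show ?thesis by blast
  qed
  ultimately show ?thesis using that by blast
qed

lemma mono4_sum_is_form:
  assumes "finite T" and "\<And>b. b \<in> T \<Longrightarrow> deg4 b = d"
  shows "is_form 4 d (\<lambda>v. \<Sum>b\<in>T. C b * mono4 b v)"
proof -
  define expf where "expf b = (\<lambda>r. if r < 4 then exponent4 b r else 0)" for b
  have expf_inv: "(expf b 0, expf b 1, expf b 2, expf b 3) = b" for b
    by (cases b) (simp add: expf_def)
  have "inj_on expf T"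
    by (rule inj_onI) (metis expf_inv)
  have "(\<Prod>i<4. x i ^ expf b i) = mono4 b x" for b x
    by (simp add: mono4_def expf_def)
  then have "(\<Sum>b\<in>T. C b * mono4 b x)
      = (\<Sum>a\<in>expf ` T. C (a 0, a 1, a 2, a 3) * (\<Prod>i<4. x i ^ a i))" for x
    by (simp add: sum.reindex[OF \<open>inj_on expf T\<close>] expf_inv[simplified])
  moreover have "\<forall>a\<in>expf ` T. (\<forall>i\<ge>4. a i = 0) \<and> (\<Sum>i<4. a i) = d"
    using assms(2) by (auto simp: expf_def deg4_def)
  ultimately show ?thesis
    unfolding is_form_def using \<open>finite T\<close>
    by (intro exI[of _ "expf ` T"] exI[of _ "\<lambda>a. C (a 0, a 1, a 2, a 3)"]) simp
qed

lemma sum_exp_box: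
  "(\<Sum>b\<in>exp_box d. g b) = (\<Sum>i\<le>d. \<Sum>j\<le>d. \<Sum>k\<le>d. \<Sum>l\<le>d. g (i, j, k, l))"
  by (simp add: exp_box_def sum.cartesian_product)

lemma exp_box_sum_nested:
  "(\<Sum>b\<in>exp_box d. D b * mono4 b L)
     = (\<Sum>i\<le>d. (\<Sum>j\<le>d. (\<Sum>k\<le>d. (\<Sum>l\<le>d. D (i, j, k, l) * L 3 ^ l) * L 2 ^ k) * L 1 ^ j) * L 0 ^ i)"
  by (simp add: sum_exp_box sum_distrib_left sum_distrib_right mult_ac)

lemma mono4_sum_eq_0_imp_coeff_eq_0:
  assumes "\<And>L. (\<Sum>b\<in>exp_box d. D b * mono4 b L) = 0" and "b \<in> exp_box d"
  shows "D b = 0"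
proof -
  have poly0: "c i = 0" if "\<And>x::real. (\<Sum>i\<le>d. c i * x ^ i) = 0" "i \<le> d" for c i
    using polyfun_eq_0[of c d] that by auto
  obtain i j k l where b: "b = (i, j, k, l)" and "i \<le> d" "j \<le> d" "k \<le> d" "l \<le> d"
    using assms(2) by (cases b) (auto simp: exp_box_def)
  have "(\<Sum>i\<le>d. (\<Sum>j\<le>d. (\<Sum>k\<le>d. (\<Sum>l\<le>d. D (i, j, k, l) * x3 ^ l) * x2 ^ k) * x1 ^ j) * x0 ^ i) = 0"
    for x0 x1 x2 x3
    using assms(1)[of "\<lambda>n. if n = 0 then x0 else if n = 1 then x1 else if n = 2 then x2 else x3"]
    by (simp add: exp_box_sum_nested)
  then have "(\<Sum>j\<le>d. (\<Sum>k\<le>d. (\<Sum>l\<le>d. D (i, j, k, l) * x3 ^ l) * x2 ^ k) * x1 ^ j) = 0" for x1 x2 x3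
    using poly0[where c = "\<lambda>i. \<Sum>j\<le>d. (\<Sum>k\<le>d. (\<Sum>l\<le>d. D (i, j, k, l) * x3 ^ l) * x2 ^ k) * x1 ^ j",
      OF _ \<open>i \<le> d\<close>] by blast
  then have "(\<Sum>k\<le>d. (\<Sum>l\<le>d. D (i, j, k, l) * x3 ^ l) * x2 ^ k) = 0" for x2 x3
    using poly0[where c = "\<lambda>j. \<Sum>k\<le>d. (\<Sum>l\<le>d. D (i, j, k, l) * x3 ^ l) * x2 ^ k",
      OF _ \<open>j \<le> d\<close>] by blast
  then have "(\<Sum>l\<le>d. D (i, j, k, l) * x3 ^ l) = 0" for x3
    using poly0[where c = "\<lambda>k. \<Sum>l\<le>d. D (i, j, k, l) * x3 ^ l", OF _ \<open>k \<le> d\<close>] by blast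
  then show ?thesis
    using poly0[where c = "\<lambda>l. D (i, j, k, l)", OF _ \<open>l \<le> d\<close>] b by blast
qed

lemma poly_coeff_eq_0_if_small_at_0:
  fixes d :: "nat \<Rightarrow> real"
  assumes small: "\<And>t. 0 < t \<Longrightarrow> t \<le> 1 \<Longrightarrow> \<bar>\<Sum>k\<le>N. d k * t ^ k\<bar> \<le> K * t ^ m"
  shows "n < m \<Longrightarrow> n \<le> N \<Longrightarrow> d n = 0"
proof (induction n rule: less_induct)
  case (less n)
  define r where "r t = (\<Sum>k\<in>{n..N}. d k * t ^ (k - n))" for t :: real
  have "K \<ge> 0"
    using small[of 1] by (auto intro: order_trans[OF abs_ge_zero])
  have "r 0 = (\<Sum>k\<in>{n..N}. if k = n then d k else 0)"
    unfolding r_def by (intro sum.cong) (auto simp: power_0_left)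
  then have r_at_0: "r 0 = d n"
    using \<open>n \<le> N\<close> by simp
  have "(r \<longlongrightarrow> r 0) (at_right 0)"
    unfolding r_def by (intro tendsto_intros)
  then have lim_r: "((\<lambda>t. \<bar>r t\<bar>) \<longlongrightarrow> \<bar>d n\<bar>) (at_right 0)"
    using r_at_0 tendsto_rabs by fastforce
  have lim_K: "((\<lambda>t. K * t) \<longlongrightarrow> 0) (at_right 0)"
    by (intro tendsto_eq_intros) auto
  have "\<bar>r t\<bar> \<le> K * t" if t: "0 < t" "t < 1" for t
  proof -
    have "(\<Sum>k\<le>N. d k * t ^ k) = (\<Sum>k\<in>{n..N}. d k * t ^ k)"
      using less by (intro sum.mono_neutral_right) auto
    also have "\<dots> = t ^ n * r t"
      by (simp add: r_def sum_distrib_left mult_ac power_add[symmetric])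
    finally have "t ^ n * \<bar>r t\<bar> \<le> K * t ^ m"
      using small[of t] t by (simp add: abs_mult)
    also have "\<dots> \<le> K * t ^ Suc n"
      using t \<open>n < m\<close> \<open>K \<ge> 0\<close> by (intro mult_left_mono power_decreasing) auto
    finally show ?thesis
      using t by simp
  qed
  then have "\<forall>\<^sub>F t in at_right 0. \<bar>r t\<bar> \<le> K * t"
    using eventually_at_right_real[of 0 1] by (auto elim: eventually_mono)
  then have "\<bar>d n\<bar> \<le> 0"
    by (rule tendsto_le[OF trivial_limit_at_right_real lim_K lim_r])
  then show ?case by simp
qed

lemma mono4_scale: "mono4 b (\<lambda>r. L r * t ^ p r) = mono4 b L * t ^ wdeg4 b p"
  by (simp add: mono4_def wdeg4_def power_mult_distrib prod.distrib power_sum mult.commute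
      flip: power_mult)

lemma mono4_sum_scaled_bound:
  fixes t :: real
  assumes "finite S" and "\<And>b. b \<in> S \<Longrightarrow> m \<le> wdeg4 b p" and "0 < t" "t \<le> 1"
  shows "\<bar>\<Sum>b\<in>S. E b * mono4 b (\<lambda>r. L r * t ^ p r)\<bar> \<le> (\<Sum>b\<in>S. \<bar>E b * mono4 b L\<bar>) * t ^ m"
proof -
  have "\<bar>\<Sum>b\<in>S. E b * mono4 b (\<lambda>r. L r * t ^ p r)\<bar> \<le> (\<Sum>b\<in>S. \<bar>E b * mono4 b L\<bar> * t ^ wdeg4 b p)"
    using \<open>t > 0\<close> by (auto intro: order_trans[OF sum_abs] simp: mono4_scale abs_mult mult.assoc)
  also have "\<dots> \<le> (\<Sum>b\<in>S. \<bar>E b * mono4 b L\<bar> * t ^ m)"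
    using assms by (intro sum_mono mult_left_mono power_decreasing) auto
  finally show ?thesis
    by (simp add: sum_distrib_right)
qed

lemma coeff_eq_0_below_weighted_order:
  assumes G: "\<And>v. G v = (\<Sum>b\<in>exp_box d. C b * mono4 b v)"
    and H: "\<And>v. H v = (\<Sum>b\<in>S. E b * mono4 b v)" and "finite S"
    and H_order: "\<And>b. b \<in> S \<Longrightarrow> m \<le> wdeg4 b p"
    and dominated: "\<And>v. \<bar>G v\<bar> \<le> \<bar>H v\<bar>"
    and b: "b \<in> exp_box d" "wdeg4 b p < m"
  shows "C b = 0"
proof -
  define N where "N = Max ((\<lambda>c. wdeg4 c p) ` exp_box d)"
  have wdeg_N: "(\<lambda>c. wdeg4 c p) ` exp_box d \<subseteq> {..N}"
    by (auto simp: N_def)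
  define a where "a L k = (\<Sum>c\<in>{c\<in>exp_box d. wdeg4 c p = k}. C c * mono4 c L)" for L k
  have G_scaled: "G (\<lambda>r. L r * t ^ p r) = (\<Sum>k\<le>N. a L k * t ^ k)" for L and t :: real
  proof -
    have "G (\<lambda>r. L r * t ^ p r) = (\<Sum>c\<in>exp_box d. C c * mono4 c L * t ^ wdeg4 c p)"
      by (simp add: G mono4_scale mult.assoc)
    also have "\<dots> = (\<Sum>k\<le>N. \<Sum>c\<in>{c\<in>exp_box d. wdeg4 c p = k}. C c * mono4 c L * t ^ wdeg4 c p)"
      by (rule sum.group[OF finite_exp_box finite_atMost wdeg_N, symmetric])
    also have "\<dots> = (\<Sum>k\<le>N. a L k * t ^ k)"
      unfolding a_def sum_distrib_right by (intro sum.cong refl) auto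
    finally show ?thesis .
  qed
  have "a L (wdeg4 b p) = 0" for L
  proof (rule poly_coeff_eq_0_if_small_at_0)
    fix t :: real assume "0 < t" "t \<le> 1"
    have "\<bar>\<Sum>k\<le>N. a L k * t ^ k\<bar> \<le> \<bar>H (\<lambda>r. L r * t ^ p r)\<bar>"
      using dominated by (simp flip: G_scaled)
    also have "\<dots> \<le> (\<Sum>c\<in>S. \<bar>E c * mono4 c L\<bar>) * t ^ m"
      unfolding H by (rule mono4_sum_scaled_bound) (use \<open>finite S\<close> H_order \<open>0 < t\<close> \<open>t \<le> 1\<close> in auto)
    finally show "\<bar>\<Sum>k\<le>N. a L k * t ^ k\<bar> \<le> (\<Sum>c\<in>S. \<bar>E c * mono4 c L\<bar>) * t ^ m" .
  qed (use b wdeg_N in auto)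
  moreover have "(\<Sum>c\<in>exp_box d. (if wdeg4 c p = wdeg4 b p then C c else 0) * mono4 c L) = a L (wdeg4 b p)" for L
    unfolding a_def by (simp add: sum.inter_filter) (intro sum.cong; simp)
  ultimately show ?thesis
    using mono4_sum_eq_0_imp_coeff_eq_0[where D = "\<lambda>c. if wdeg4 c p = wdeg4 b p then C c else 0", OF _ b(1)] by simp
qed

definition mono4_pderiv :: "nat \<Rightarrow> exp4 \<Rightarrow> (nat \<Rightarrow> real) \<Rightarrow> real" where
  "mono4_pderiv r b v =
     of_nat (exponent4 b r) * v r ^ (exponent4 b r - 1) * (\<Prod>q\<in>{..<4} - {r}. v q ^ exponent4 b q)"

lemma mono4_split_coord:
  "r < 4 \<Longrightarrow> mono4 b v = v r ^ exponent4 b r * (\<Prod>q\<in>{..<4} - {r}. v q ^ exponent4 b q)"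
  by (simp add: mono4_def prod.remove)

lemma has_real_derivative_mono4_coord:
  assumes "r < 4"
  shows "((\<lambda>t. mono4 b (v(r := t))) has_real_derivative mono4_pderiv r b v) (at (v r))"
proof -
  have "mono4 b (v(r := t)) = t ^ exponent4 b r * (\<Prod>q\<in>{..<4} - {r}. v q ^ exponent4 b q)" for t
  proof -
    have "(\<Prod>q\<in>{..<4} - {r}. (v(r := t)) q ^ exponent4 b q) = (\<Prod>q\<in>{..<4} - {r}. v q ^ exponent4 b q)"
      by (intro prod.cong) auto
    then show ?thesis
      using mono4_split_coord[OF assms, of b "v(r := t)"] by simp
  qed
  then show ?thesis
    unfolding mono4_pderiv_def by (auto intro!: derivative_eq_intros)
qed

lemma mono4_euler:
  "r < 4 \<Longrightarrow> v r * mono4_pderiv r b v = of_nat (exponent4 b r) * mono4 b v"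
  by (cases "exponent4 b r") (simp_all add: mono4_pderiv_def mono4_split_coord)

lemma psd_zero_imp_euler_sum_eq_0:
  assumes G: "\<And>v. G v = (\<Sum>b\<in>S. c b * mono4 b v)"
    and nonneg: "\<And>v. 0 \<le> G v" and "G v = 0" and "r < 4"
  shows "(\<Sum>b\<in>S. (c b * of_nat (exponent4 b r)) * mono4 b v) = 0"
proof -
  have "((\<lambda>t. G (v(r := t))) has_real_derivative (\<Sum>b\<in>S. c b * mono4_pderiv r b v)) (at (v r))"
    unfolding G by (intro DERIV_sum DERIV_cmult has_real_derivative_mono4_coord \<open>r < 4\<close>)
  then have "(\<Sum>b\<in>S. c b * mono4_pderiv r b v) = 0"
    by (rule DERIV_local_min[of _ _ _ 1]) (simp_all add: \<open>G v = 0\<close> nonneg)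
  then have "v r * (\<Sum>b\<in>S. c b * mono4_pderiv r b v) = 0"
    by simp
  then show ?thesis
    by (simp add: sum_distrib_left mult.left_commute mono4_euler[OF \<open>r < 4\<close>] mult.assoc)
qed

definition sign_vec :: "real \<Rightarrow> real \<Rightarrow> real \<Rightarrow> nat \<Rightarrow> real" where
  "sign_vec s t u = (\<lambda>r. if r = 1 then s else if r = 2 then t else if r = 3 then u else 1)"

fun parity4 :: "exp4 \<Rightarrow> bool \<times> bool \<times> bool" where
  "parity4 (i, j, k, l) = (odd j, odd k, odd l)"

fun sign_char :: "bool \<times> bool \<times> bool \<Rightarrow> real \<Rightarrow> real \<Rightarrow> real \<Rightarrow> real" where
  "sign_char (a, c, e) s t u = (if a then s else 1) * (if c then t else 1) * (if e then u else 1)"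

lemma sign_char_average:
  "(\<Sum>s\<in>{-1, 1}. \<Sum>t\<in>{-1, 1}. \<Sum>u\<in>{-1, 1}. sign_char \<pi> s t u * mono4 b (sign_vec s t u))
     = (if parity4 b = \<pi> then 8 else 0)"
  by (cases b; cases \<pi>) (auto simp: sign_vec_def minus_one_power_iff)

text \<open>Orthogonality of the characters of {\<plusminus>1}^3: averaging against sign_char \<pi> isolates the
  monomials of parity \<pi>.\<close>

lemma parity_class_sum_eq_0:
  assumes vanish: "\<And>s t u. s \<in> {-1, 1} \<Longrightarrow> t \<in> {-1, 1} \<Longrightarrow> u \<in> {-1, 1} \<Longrightarrow>
      (\<Sum>b\<in>S. c b * mono4 b (sign_vec s t u)) = 0"
  shows "(\<Sum>b\<in>S. if parity4 b = \<pi> then c b else 0) = 0"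
proof -
  have "8 * (\<Sum>b\<in>S. if parity4 b = \<pi> then c b else 0) = (\<Sum>b\<in>S. c b * (if parity4 b = \<pi> then 8 else 0))"
    unfolding sum_distrib_left by (intro sum.cong) auto
  also have "\<dots> = (\<Sum>b\<in>S. c b * (\<Sum>s\<in>{-1, 1}. \<Sum>t\<in>{-1, 1}. \<Sum>u\<in>{-1, 1}.
      sign_char \<pi> s t u * mono4 b (sign_vec s t u)))"
    by (simp only: sign_char_average)
  also have "\<dots> = (\<Sum>s\<in>{-1, 1}. \<Sum>t\<in>{-1, 1}. \<Sum>u\<in>{-1, 1}.
      sign_char \<pi> s t u * (\<Sum>b\<in>S. c b * mono4 b (sign_vec s t u)))"
    by (simp add: sum_distrib_left sum.distrib algebra_simps)
  also have "\<dots> = 0"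
    by (simp add: vanish)
  finally show ?thesis
    by simp
qed

definition O41_exps :: "exp4 set" where
  "O41_exps = {(4, 0, 2, 2), (2, 4, 0, 2), (2, 2, 4, 0), (0, 2, 2, 4), (2, 2, 2, 2)}"

lemma O41_mono4_sum: "O41 v = (\<Sum>b\<in>O41_exps. (if b = (2, 2, 2, 2) then - 4 else 1) * mono4 b v)"
  by (simp add: O41_exps_def O41_def Let_def algebra_simps)

lemma O41_form: "is_form 4 8 O41"
proof -
  have "is_form 4 8 (\<lambda>v. \<Sum>b\<in>O41_exps. (if b = (2, 2, 2, 2) then - 4 else 1) * mono4 b v)"
    by (rule mono4_sum_is_form) (auto simp: O41_exps_def deg4_simps)
  then show ?thesis
    by (simp flip: O41_mono4_sum)
qed

lemma O41_nonneg: "0 \<le> O41 v"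
proof -
  have amgm: "0 \<le> a^4*c^2*d^2 + b^4*a^2*d^2 + c^4*a^2*b^2 + d^4*b^2*c^2 - 4*a^2*b^2*c^2*d^2"
    if "0 \<le> a" "0 \<le> b" "0 \<le> c" "0 \<le> d" for a b c d :: real
  proof -
    have "a^4*c^2*d^2 + b^4*a^2*d^2 + c^4*a^2*b^2 + d^4*b^2*c^2 - 4*a^2*b^2*c^2*d^2
        = (a^2*c*d - a*b^2*d)^2 + (a*b*c^2 - b*c*d^2)^2 + 2*(a*b^2*c*d^2)*(a-c)^2"
      by (simp add: power2_eq_square eval_nat_numeral algebra_simps)
    moreover have "0 \<le> a*b^2*c*d^2"
      using that by simp
    ultimately show ?thesis
      by (metis add_nonneg_nonneg mult_nonneg_nonneg zero_le_power2 zero_le_numeral)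
  qed
  show ?thesis
    using amgm[of "\<bar>v 0\<bar>" "\<bar>v 1\<bar>" "\<bar>v 2\<bar>" "\<bar>v 3\<bar>"] by (simp add: O41_def Let_def)
qed

text \<open>The Newton polytope of O41 is the simplex spanned by the exponents of its four positive
  terms; its facets are the hyperplanes on which these weights have weighted degree 10.\<close>

definition cyclic_weight :: "nat \<Rightarrow> nat \<Rightarrow> nat" where
  "cyclic_weight r n = (n + r) mod 4"

lemma O41_exps_weight:
  assumes "b \<in> O41_exps" and "r < 4"
  shows "10 \<le> wdeg4 b (cyclic_weight r)"
proof -
  have "r \<in> {0, 1, 2, 3}"
    using \<open>r < 4\<close> by auto
  then show ?thesis
    using \<open>b \<in> O41_exps\<close> by (auto simp: O41_exps_def wdeg4_simps cyclic_weight_def)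
qed

definition O41_newton_points :: "exp4 set" where
  "O41_newton_points =
     {(0,2,2,4), (1,2,2,3), (1,2,3,2), (1,3,1,3), (2,1,2,3), (2,2,2,2), (2,2,3,1), (2,2,4,0),
      (2,3,1,2), (2,3,2,1), (2,4,0,2), (3,1,2,2), (3,1,3,1), (3,2,1,2), (4,0,2,2)}"

lemma in_O41_newton_points:
  assumes "deg4 b = 8" and "\<And>r. r < 4 \<Longrightarrow> 10 \<le> wdeg4 b (cyclic_weight r)"
  shows "b \<in> O41_newton_points"
proof -
  obtain i j k l where b: "b = (i, j, k, l)" by (cases b)
  have bounds: "i + j + k + l = 8" "10 \<le> 3*i + k + 2*l" "10 \<le> 2*i + 3*j + l" "10 \<le> i + 2*j + 3*k"
      "10 \<le> j + 2*k + 3*l"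
    using assms(1) assms(2)[of 0] assms(2)[of 1] assms(2)[of 2] assms(2)[of 3]
    by (simp_all add: b deg4_simps wdeg4_simps cyclic_weight_def)
  then have "i \<in> {0, 1, 2, 3, 4}" "j \<in> {0, 1, 2, 3, 4}" "k \<in> {0, 1, 2, 3, 4}"
    "l = 8 - i - j - k"
    by auto
  with bounds show ?thesis
    unfolding b O41_newton_points_def by (elim insertE emptyE) simp_all
qed

lemma O41_sign_vec: "s \<in> {-1, 1} \<Longrightarrow> t \<in> {-1, 1} \<Longrightarrow> u \<in> {-1, 1} \<Longrightarrow> O41 (sign_vec s t u) = 0"
  by (auto simp: O41_def sign_vec_def)

lemma O41_newton_sum_eq_multiple:
  assumes class_sum: "\<And>\<pi>. (\<Sum>b\<in>O41_newton_points. if parity4 b = \<pi> then C b else 0) = 0"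
    and euler_sum: "\<And>\<pi> r. r < 4 \<Longrightarrow>
      (\<Sum>b\<in>O41_newton_points. if parity4 b = \<pi> then C b * of_nat (exponent4 b r) else 0) = 0"
  shows "(\<Sum>b\<in>O41_newton_points. C b * mono4 b v) = C (4, 0, 2, 2) * O41 v"
proof -
  have "C (1,2,2,3) = 0" "C (2,2,3,1) = 0" "C (2,3,1,2) = 0" "C (3,1,2,2) = 0"
    using class_sum[of "(False, False, True)"] class_sum[of "(False, True, True)"]
      class_sum[of "(True, True, False)"] class_sum[of "(True, False, False)"]
    by (simp_all add: O41_newton_points_def)
  moreover have "C (1,2,3,2) = 0" "C (3,2,1,2) = 0"
    using class_sum[of "(False, True, False)"] euler_sum[of 0 "(False, True, False)"]
    by (simp_all add: O41_newton_points_def)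
  moreover have "C (1,3,1,3) = 0" "C (3,1,3,1) = 0"
    using class_sum[of "(True, True, True)"] euler_sum[of 0 "(True, True, True)"]
    by (simp_all add: O41_newton_points_def)
  moreover have "C (2,1,2,3) = 0" "C (2,3,2,1) = 0"
    using class_sum[of "(True, False, True)"] euler_sum[of 1 "(True, False, True)"]
    by (simp_all add: O41_newton_points_def)
  moreover have "C (0,2,2,4) = C (4,0,2,2)" "C (2,4,0,2) = C (4,0,2,2)" "C (2,2,4,0) = C (4,0,2,2)"
      "C (2,2,2,2) = - 4 * C (4,0,2,2)"
    using class_sum[of "(False, False, False)"] euler_sum[of 0 "(False, False, False)"]
      euler_sum[of 1 "(False, False, False)"] euler_sum[of 2 "(False, False, False)"]
    by (simp_all add: O41_newton_points_def)
  ultimately show ?thesis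
    by (simp add: O41_newton_points_def O41_def Let_def algebra_simps)
qed

lemma dominated_by_O41_newton_sum:
  assumes F: "\<And>v. F v = (\<Sum>b\<in>exp_box 8. C b * mono4 b v)"
    and deg: "\<And>b. C b \<noteq> 0 \<Longrightarrow> deg4 b = 8"
    and dominated: "\<And>v. \<bar>F v\<bar> \<le> \<bar>O41 v\<bar>"
  shows "F v = (\<Sum>b\<in>O41_newton_points. C b * mono4 b v)"
proof -
  have newton: "b \<in> O41_newton_points" if "b \<in> exp_box 8" "C b \<noteq> 0" for b
  proof (rule in_O41_newton_points)
    show "deg4 b = 8"
      using deg that by blast
    fix r :: nat assume "r < 4"
    show "10 \<le> wdeg4 b (cyclic_weight r)"
    proof (rule ccontr)
      assume "\<not> ?thesis"
      then have "C b = 0"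
        by (intro coeff_eq_0_below_weighted_order[OF F O41_mono4_sum _ O41_exps_weight[OF _ \<open>r < 4\<close>] dominated])
          (use that in \<open>auto simp: O41_exps_def\<close>)
      with \<open>C b \<noteq> 0\<close> show False ..
    qed
  qed
  have "O41_newton_points \<subseteq> exp_box 8"
    by (simp add: O41_newton_points_def exp_box_def)
  then show ?thesis
    unfolding F by (rule sum.mono_neutral_right[OF finite_exp_box]) (use newton in force)
qed

lemma psd_below_O41_is_multiple:
  assumes "F \<in> psd_forms 4 8" and below: "\<And>v. F v \<le> O41 v"
  shows "\<exists>c. \<forall>v. F v = c * O41 v"
proof -
  have nonneg: "\<And>v. 0 \<le> F v" and "is_form 4 8 F"
    using assms(1) by (auto simp: psd_forms_def)
  obtain C where F: "\<And>v. F v = (\<Sum>b\<in>exp_box 8. C b * mono4 b v)"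
    and supp: "\<And>b. C b \<noteq> 0 \<Longrightarrow> b \<in> exp_box 8 \<and> deg4 b = 8"
    using is_form_4_imp_mono4_sum[OF \<open>is_form 4 8 F\<close>] by blast
  have "\<bar>F v\<bar> \<le> \<bar>O41 v\<bar>" for v
    using nonneg[of v] below[of v] by simp
  then have F_newton: "F v = (\<Sum>b\<in>O41_newton_points. C b * mono4 b v)" for v
    using dominated_by_O41_newton_sum[OF F] supp by blast
  have zero: "F (sign_vec s t u) = 0" if "s \<in> {-1, 1}" "t \<in> {-1, 1}" "u \<in> {-1, 1}" for s t u
    using nonneg below O41_sign_vec[OF that] by (metis order_antisym)
  have class_sum: "(\<Sum>b\<in>O41_newton_points. if parity4 b = \<pi> then C b else 0) = 0" for \<pi>
    by (rule parity_class_sum_eq_0) (simp flip: F_newton add: zero)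
  have euler_sum: "(\<Sum>b\<in>O41_newton_points. if parity4 b = \<pi> then C b * of_nat (exponent4 b r) else 0) = 0"
    if "r < 4" for \<pi> r
    by (rule parity_class_sum_eq_0) (rule psd_zero_imp_euler_sum_eq_0[OF F_newton nonneg zero \<open>r < 4\<close>])
  have "F v = C (4, 0, 2, 2) * O41 v" for v
    unfolding F_newton by (rule O41_newton_sum_eq_multiple[OF class_sum euler_sum])
  then show ?thesis
    by blast
qed

theorem theorem1:
  shows "extremal 4 8 O41"
  unfolding extremal_def
proof (intro conjI allI impI)
  show "O41 \<in> psd_forms 4 8"
    using O41_form O41_nonneg by (simp add: psd_forms_def)
  fix F1 F2
  assume F1: "F1 \<in> psd_forms 4 8" and F2: "F2 \<in> psd_forms 4 8" and decomp: "\<forall>x. O41 x = F1 x + F2 x"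
  then have "F1 v \<le> O41 v" for v
    by (auto simp: psd_forms_def)
  then obtain c where c: "\<forall>v. F1 v = c * O41 v"
    using psd_below_O41_is_multiple[OF F1] by blast
  define p where "p = sign_vec 0 1 1"
  have "O41 p = 1" "0 \<le> F1 p" "0 \<le> F2 p"
    using F1 F2 by (auto simp: p_def sign_vec_def O41_def psd_forms_def)
  then have "0 \<le> c" "0 \<le> 1 - c"
    using c decomp by (metis mult.right_neutral, metis add_diff_cancel_left' mult.right_neutral)
  moreover have "\<forall>v. F2 v = (1 - c) * O41 v"
    using c decomp by (simp add: algebra_simps)
  ultimately show "\<exists>l1 l2. 0 \<le> l1 \<and> 0 \<le> l2 \<and> (\<forall>x. F1 x = l1 * O41 x) \<and> (\<forall>x. F2 x = l2 * O41 x)"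
    using c by blast
qed

end
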